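(* Let $(\mathcal{A},\mathcal{E})$ be an exact category and let $X\xrightarrow{f}Y\xrightarrow{g}Z$ be a short exact sequence in $\mathcal{E}$ whose three objects are $\mathcal{E}$-finite. Then $l_\mathcal{E}(Y)\ge l_\mathcal{E}(X)+l_\mathcal{E}(Z)$.
   Context: $(\mathcal{A},\mathcal{E})$ is a Quillen exact category; admissible monics are morphisms $i$ with $(i,d)\in\mathcal{E}$ for some $d$. The $\mathcal{E}$-length $l_\mathcal{E}(X)\in\mathbb{N}\cup\{\infty\}$ is the supremum of all $n$ such that there is a chain $0=X_0\to X_1\to\cdots\to X_n=X$ of admissible monics none of which is an isomorphism; $X$ is $\mathcal{E}$-finite if $l_\mathcal{E}(X)<\infty$. *)

theory Defs
  imports "HOL-Library.Extended_Nat"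
begin

text \<open>A category with additive structure on hom-sets, presented as a record.
  Comp g f denotes the composite g after f (defined when Cod f = Dom g).\<close>

record ('o, 'm) addcat =
  Obj  :: "'o set"
  Mor  :: "'m set"
  Dom  :: "'m \<Rightarrow> 'o"
  Cod  :: "'m \<Rightarrow> 'o"
  Id   :: "'o \<Rightarrow> 'm"
  Comp :: "'m \<Rightarrow> 'm \<Rightarrow> 'm"
  Add  :: "'m \<Rightarrow> 'm \<Rightarrow> 'm"
  Neg  :: "'m \<Rightarrow> 'm"
  Zm   :: "'o \<Rightarrow> 'o \<Rightarrow> 'm"

definition hom :: "('o, 'm, 'x) addcat_scheme \<Rightarrow> 'o \<Rightarrow> 'o \<Rightarrow> 'm set" where
  "hom C a b = {f \<in> Mor C. Dom C f = a \<and> Cod C f = b}"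

definition category :: "('o, 'm, 'x) addcat_scheme \<Rightarrow> bool" where
  "category C \<longleftrightarrow>
     (\<forall>f \<in> Mor C. Dom C f \<in> Obj C \<and> Cod C f \<in> Obj C) \<and>
     (\<forall>a \<in> Obj C. Id C a \<in> hom C a a) \<and>
     (\<forall>f \<in> Mor C. \<forall>g \<in> Mor C. Cod C f = Dom C g \<longrightarrow>
         Comp C g f \<in> hom C (Dom C f) (Cod C g)) \<and>
     (\<forall>f \<in> Mor C. Comp C f (Id C (Dom C f)) = f \<and> Comp C (Id C (Cod C f)) f = f) \<and>
     (\<forall>f \<in> Mor C. \<forall>g \<in> Mor C. \<forall>h \<in> Mor C. Cod C f = Dom C g \<longrightarrow> Cod C g = Dom C h \<longrightarrow>
         Comp C h (Comp C g f) = Comp C (Comp C h g) f)"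

definition preadditive :: "('o, 'm, 'x) addcat_scheme \<Rightarrow> bool" where
  "preadditive C \<longleftrightarrow> category C \<and>
     (\<forall>a \<in> Obj C. \<forall>b \<in> Obj C.
        Zm C a b \<in> hom C a b \<and>
        (\<forall>f \<in> hom C a b. \<forall>g \<in> hom C a b. Add C f g \<in> hom C a b) \<and>
        (\<forall>f \<in> hom C a b. Neg C f \<in> hom C a b) \<and>
        (\<forall>f \<in> hom C a b. \<forall>g \<in> hom C a b. \<forall>h \<in> hom C a b.
            Add C (Add C f g) h = Add C f (Add C g h)) \<and>
        (\<forall>f \<in> hom C a b. \<forall>g \<in> hom C a b. Add C f g = Add C g f) \<and>
        (\<forall>f \<in> hom C a b. Add C f (Zm C a b) = f) \<and>
        (\<forall>f \<in> hom C a b. Add C f (Neg C f) = Zm C a b)) \<and>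
     (\<forall>a \<in> Obj C. \<forall>b \<in> Obj C. \<forall>c \<in> Obj C.
        \<forall>f \<in> hom C a b. \<forall>f' \<in> hom C a b. \<forall>g \<in> hom C b c. \<forall>g' \<in> hom C b c.
          Comp C g (Add C f f') = Add C (Comp C g f) (Comp C g f') \<and>
          Comp C (Add C g g') f = Add C (Comp C g f) (Comp C g' f))"

definition zero_obj :: "('o, 'm, 'x) addcat_scheme \<Rightarrow> 'o \<Rightarrow> bool" where
  "zero_obj C z \<longleftrightarrow> z \<in> Obj C \<and>
     (\<forall>a \<in> Obj C. (\<exists>!f. f \<in> hom C z a) \<and> (\<exists>!f. f \<in> hom C a z))"

definition is_biproduct :: "('o, 'm, 'x) addcat_scheme \<Rightarrow> 'o \<Rightarrow> 'o \<Rightarrow> 'o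
    \<Rightarrow> 'm \<Rightarrow> 'm \<Rightarrow> 'm \<Rightarrow> 'm \<Rightarrow> bool" where
  "is_biproduct C a b p i1 i2 p1 p2 \<longleftrightarrow> p \<in> Obj C \<and>
     i1 \<in> hom C a p \<and> i2 \<in> hom C b p \<and> p1 \<in> hom C p a \<and> p2 \<in> hom C p b \<and>
     Comp C p1 i1 = Id C a \<and> Comp C p2 i2 = Id C b \<and>
     Comp C p1 i2 = Zm C b a \<and> Comp C p2 i1 = Zm C a b \<and>
     Add C (Comp C i1 p1) (Comp C i2 p2) = Id C p"

definition additive :: "('o, 'm, 'x) addcat_scheme \<Rightarrow> bool" where
  "additive C \<longleftrightarrow> preadditive C \<and> (\<exists>z. zero_obj C z) \<and>
     (\<forall>a \<in> Obj C. \<forall>b \<in> Obj C. \<exists>p i1 i2 p1 p2. is_biproduct C a b p i1 i2 p1 p2)"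

definition is_iso :: "('o, 'm, 'x) addcat_scheme \<Rightarrow> 'm \<Rightarrow> bool" where
  "is_iso C f \<longleftrightarrow> f \<in> Mor C \<and> (\<exists>g \<in> hom C (Cod C f) (Dom C f).
      Comp C g f = Id C (Dom C f) \<and> Comp C f g = Id C (Cod C f))"

definition is_kernel :: "('o, 'm, 'x) addcat_scheme \<Rightarrow> 'm \<Rightarrow> 'm \<Rightarrow> bool" where
  "is_kernel C i d \<longleftrightarrow> i \<in> Mor C \<and> d \<in> Mor C \<and> Cod C i = Dom C d \<and>
     Comp C d i = Zm C (Dom C i) (Cod C d) \<and>
     (\<forall>t \<in> Obj C. \<forall>h \<in> hom C t (Dom C d). Comp C d h = Zm C t (Cod C d) \<longrightarrow>
        (\<exists>!u. u \<in> hom C t (Dom C i) \<and> Comp C i u = h))"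

definition is_cokernel :: "('o, 'm, 'x) addcat_scheme \<Rightarrow> 'm \<Rightarrow> 'm \<Rightarrow> bool" where
  "is_cokernel C d i \<longleftrightarrow> i \<in> Mor C \<and> d \<in> Mor C \<and> Cod C i = Dom C d \<and>
     Comp C d i = Zm C (Dom C i) (Cod C d) \<and>
     (\<forall>t \<in> Obj C. \<forall>h \<in> hom C (Cod C i) t. Comp C h i = Zm C (Dom C i) t \<longrightarrow>
        (\<exists>!u. u \<in> hom C (Cod C d) t \<and> Comp C u d = h))"

definition kernel_cokernel_pair :: "('o, 'm, 'x) addcat_scheme \<Rightarrow> 'm \<Rightarrow> 'm \<Rightarrow> bool" where
  "kernel_cokernel_pair C i d \<longleftrightarrow> is_kernel C i d \<and> is_cokernel C d i"

definition is_pushout :: "('o, 'm, 'x) addcat_scheme \<Rightarrow> 'm \<Rightarrow> 'm \<Rightarrow> 'm \<Rightarrow> 'm \<Rightarrow> bool" where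
  "is_pushout C i f i' f' \<longleftrightarrow>
     i \<in> Mor C \<and> f \<in> Mor C \<and> i' \<in> Mor C \<and> f' \<in> Mor C \<and>
     Dom C i = Dom C f \<and> Dom C i' = Cod C f \<and> Dom C f' = Cod C i \<and> Cod C i' = Cod C f' \<and>
     Comp C i' f = Comp C f' i \<and>
     (\<forall>t \<in> Obj C. \<forall>u \<in> hom C (Cod C f) t. \<forall>v \<in> hom C (Cod C i) t.
        Comp C u f = Comp C v i \<longrightarrow>
        (\<exists>!w. w \<in> hom C (Cod C i') t \<and> Comp C w i' = u \<and> Comp C w f' = v))"

definition is_pullback :: "('o, 'm, 'x) addcat_scheme \<Rightarrow> 'm \<Rightarrow> 'm \<Rightarrow> 'm \<Rightarrow> 'm \<Rightarrow> bool" where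
  "is_pullback C d f d' f' \<longleftrightarrow>
     d \<in> Mor C \<and> f \<in> Mor C \<and> d' \<in> Mor C \<and> f' \<in> Mor C \<and>
     Cod C d = Cod C f \<and> Cod C d' = Dom C f \<and> Cod C f' = Dom C d \<and> Dom C d' = Dom C f' \<and>
     Comp C d f' = Comp C f d' \<and>
     (\<forall>t \<in> Obj C. \<forall>u \<in> hom C t (Dom C f). \<forall>v \<in> hom C t (Dom C d).
        Comp C f u = Comp C d v \<longrightarrow>
        (\<exists>!w. w \<in> hom C t (Dom C d') \<and> Comp C d' w = u \<and> Comp C f' w = v))"

definition adm_monic :: "('o, 'm, 'x) addcat_scheme \<Rightarrow> ('m \<times> 'm) set \<Rightarrow> 'm \<Rightarrow> bool" where
  "adm_monic C E i \<longleftrightarrow> (\<exists>d. (i, d) \<in> E)"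

definition adm_epic :: "('o, 'm, 'x) addcat_scheme \<Rightarrow> ('m \<times> 'm) set \<Rightarrow> 'm \<Rightarrow> bool" where
  "adm_epic C E d \<longleftrightarrow> (\<exists>i. (i, d) \<in> E)"

definition exact_category :: "('o, 'm, 'x) addcat_scheme \<Rightarrow> ('m \<times> 'm) set \<Rightarrow> bool" where
  "exact_category C E \<longleftrightarrow> additive C \<and>
     \<comment> \<open>E is a class of kernel-cokernel pairs closed under isomorphism\<close>
     (\<forall>(i, d) \<in> E. kernel_cokernel_pair C i d) \<and>
     (\<forall>i d i' d' a b c. (i, d) \<in> E \<longrightarrow> kernel_cokernel_pair C i' d' \<longrightarrow>
        is_iso C a \<longrightarrow> is_iso C b \<longrightarrow> is_iso C c \<longrightarrow>
        Dom C a = Dom C i \<longrightarrow> Cod C a = Dom C i' \<longrightarrow>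
        Dom C b = Cod C i \<longrightarrow> Cod C b = Cod C i' \<longrightarrow>
        Dom C c = Cod C d \<longrightarrow> Cod C c = Cod C d' \<longrightarrow>
        Comp C b i = Comp C i' a \<longrightarrow> Comp C c d = Comp C d' b \<longrightarrow> (i', d') \<in> E) \<and>
     \<comment> \<open>E0, E0op\<close>
     (\<forall>a \<in> Obj C. adm_monic C E (Id C a) \<and> adm_epic C E (Id C a)) \<and>
     \<comment> \<open>E1, E1op\<close>
     (\<forall>i j. adm_monic C E i \<longrightarrow> adm_monic C E j \<longrightarrow> Cod C i = Dom C j \<longrightarrow>
        adm_monic C E (Comp C j i)) \<and>
     (\<forall>d e. adm_epic C E d \<longrightarrow> adm_epic C E e \<longrightarrow> Cod C d = Dom C e \<longrightarrow>
        adm_epic C E (Comp C e d)) \<and>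
     \<comment> \<open>E2: pushouts of admissible monics exist and are admissible monics\<close>
     (\<forall>i f. adm_monic C E i \<longrightarrow> f \<in> Mor C \<longrightarrow> Dom C f = Dom C i \<longrightarrow>
        (\<exists>i' f'. is_pushout C i f i' f' \<and> adm_monic C E i')) \<and>
     \<comment> \<open>E2op: pullbacks of admissible epics exist and are admissible epics\<close>
     (\<forall>d f. adm_epic C E d \<longrightarrow> f \<in> Mor C \<longrightarrow> Cod C f = Cod C d \<longrightarrow>
        (\<exists>d' f'. is_pullback C d f d' f' \<and> adm_epic C E d'))"

definition E_chain :: "('o, 'm, 'x) addcat_scheme \<Rightarrow> ('m \<times> 'm) set \<Rightarrow> 'o \<Rightarrow> nat \<Rightarrow> bool" where
  "E_chain C E X n \<longleftrightarrow> (\<exists>(Xs :: nat \<Rightarrow> 'o) (ms :: nat \<Rightarrow> 'm).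
     zero_obj C (Xs 0) \<and> Xs n = X \<and>
     (\<forall>k < n. adm_monic C E (ms k) \<and> Dom C (ms k) = Xs k \<and> Cod C (ms k) = Xs (Suc k) \<and>
              \<not> is_iso C (ms k)))"

definition E_length :: "('o, 'm, 'x) addcat_scheme \<Rightarrow> ('m \<times> 'm) set \<Rightarrow> 'o \<Rightarrow> enat" where
  "E_length C E X = (SUP n \<in> {n. E_chain C E X n}. enat n)"

definition E_finite :: "('o, 'm, 'x) addcat_scheme \<Rightarrow> ('m \<times> 'm) set \<Rightarrow> 'o \<Rightarrow> bool" where
  "E_finite C E X \<longleftrightarrow> E_length C E X < \<infinity>"

end

theory Submission
  imports Defs
begin

text \<open>Let 0 = Z_0 \<rightarrowtail> ... \<rightarrowtail> Z_b = Z be a chain of maximal length b. Pulling the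
  conflation X \<rightarrowtail> Y \<twoheadrightarrow> Z back along the last monic Z_{b-1} \<rightarrowtail> Z gives a conflation
  X \<rightarrowtail> P \<twoheadrightarrow> Z_{b-1} together with a monic P \<rightarrowtail> Y. The latter is admissible, being a
  kernel of Y \<twoheadrightarrow> Z \<twoheadrightarrow> Z/Z_{b-1}, and it is not an isomorphism, since otherwise Y \<twoheadrightarrow> Z
  would factor through Z_{b-1} \<rightarrowtail> Z and force it to be invertible. After b such steps the
  quotient is 0, so the object reached is isomorphic to X; a chain of maximal length a for X
  followed by the b monics collected on the way is a chain of length a + b ending in Y.\<close>

inductive adm_path :: "('o, 'm, 'x) addcat_scheme \<Rightarrow> ('m \<times> 'm) set \<Rightarrow> 'o \<Rightarrow> 'o \<Rightarrow> nat \<Rightarrow> bool"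
  for C E where
  refl: "adm_path C E A A 0"
| snoc: "adm_path C E A B n \<Longrightarrow> adm_monic C E m \<Longrightarrow> Dom C m = B \<Longrightarrow> Cod C m = B' \<Longrightarrow>
    \<not> is_iso C m \<Longrightarrow> adm_path C E A B' (Suc n)"

lemma adm_path_iff:
  "adm_path C E A B n \<longleftrightarrow> (\<exists>Xs ms. Xs 0 = A \<and> Xs n = B \<and>
     (\<forall>k < n. adm_monic C E (ms k) \<and> Dom C (ms k) = Xs k \<and> Cod C (ms k) = Xs (Suc k) \<and>
              \<not> is_iso C (ms k)))"
  (is "?path \<longleftrightarrow> ?links")
proof
  show ?links if ?path
    using that
  proof induction
    case (refl A)
    show ?case by (rule exI[of _ "\<lambda>_. A"]) simp
  next
    case (snoc A B n m B')
    then obtain Xs ms where "Xs 0 = A" "Xs n = B" and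
      "\<forall>k < n. adm_monic C E (ms k) \<and> Dom C (ms k) = Xs k \<and> Cod C (ms k) = Xs (Suc k) \<and>
              \<not> is_iso C (ms k)"
      by blast
    with snoc.hyps(2-5) show ?case
      by (intro exI[of _ "Xs(Suc n := B')"] exI[of _ "ms(n := m)"]) (auto simp: less_Suc_eq)
  qed
next
  assume ?links
  then obtain Xs ms where ends: "Xs 0 = A" "Xs n = B" and
    links: "\<forall>k < n. adm_monic C E (ms k) \<and> Dom C (ms k) = Xs k \<and> Cod C (ms k) = Xs (Suc k) \<and>
              \<not> is_iso C (ms k)"
    by blast
  have "j \<le> n \<Longrightarrow> adm_path C E (Xs 0) (Xs j) j" for j
  proof (induction j)
    case (Suc j)
    then have "j < n" by simp
    with links Suc.IH show ?case by (intro adm_path.snoc[where m = "ms j"]) auto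
  qed (rule adm_path.refl)
  then show ?path using ends by blast
qed

lemma E_chain_iff_adm_path: "E_chain C E X n \<longleftrightarrow> (\<exists>Z. zero_obj C Z \<and> adm_path C E Z X n)"
  unfolding E_chain_def adm_path_iff by blast

lemma E_chain_snoc:
  assumes "E_chain C E X n" and "adm_monic C E m" "Dom C m = X" "Cod C m = Y" "\<not> is_iso C m"
  shows "E_chain C E Y (Suc n)"
  using assms unfolding E_chain_iff_adm_path by (blast intro: adm_path.snoc)

lemma enat_SUP_attained:
  assumes "S \<noteq> {}" and "(SUP n\<in>S. enat n) < \<infinity>"
  obtains n where "n \<in> S" and "(SUP n\<in>S. enat n) = enat n"
proof -
  have "finite (enat ` S)"
    using assms by (auto simp: Sup_enat_def split: if_splits)
  then have "(SUP n\<in>S. enat n) \<in> enat ` S"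
    using assms(1) by (simp add: Sup_enat_def)
  then show thesis using that by blast
qed

locale cat =
  fixes C :: "('o, 'm, 'x) addcat_scheme"
  assumes category: "category C"
begin

lemma hom_Obj:
  assumes "f \<in> hom C a b"
  shows "a \<in> Obj C" and "b \<in> Obj C"
  using assms category unfolding category_def hom_def by auto

lemma comp_hom: "f \<in> hom C a b \<Longrightarrow> g \<in> hom C b c \<Longrightarrow> Comp C g f \<in> hom C a c"
  using category unfolding category_def hom_def by auto

lemma Id_hom: "a \<in> Obj C \<Longrightarrow> Id C a \<in> hom C a a"
  using category unfolding category_def by auto

lemma comp_Id_right: "f \<in> hom C a b \<Longrightarrow> Comp C f (Id C a) = f"
  using category unfolding category_def hom_def by auto

lemma comp_Id_left: "f \<in> hom C a b \<Longrightarrow> Comp C (Id C b) f = f"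
  using category unfolding category_def hom_def by auto

lemma comp_assoc:
  "f \<in> hom C a b \<Longrightarrow> g \<in> hom C b c \<Longrightarrow> h \<in> hom C c d \<Longrightarrow>
    Comp C h (Comp C g f) = Comp C (Comp C h g) f"
  using category unfolding category_def hom_def by auto

lemma is_isoI:
  "f \<in> hom C a b \<Longrightarrow> g \<in> hom C b a \<Longrightarrow> Comp C g f = Id C a \<Longrightarrow> Comp C f g = Id C b \<Longrightarrow>
    is_iso C f"
  unfolding is_iso_def hom_def by auto

lemma is_isoE:
  assumes "is_iso C f" and "f \<in> hom C a b"
  obtains g where "g \<in> hom C b a" "Comp C g f = Id C a" "Comp C f g = Id C b"
  using assms unfolding is_iso_def hom_def by auto

lemma is_iso_Id: "a \<in> Obj C \<Longrightarrow> is_iso C (Id C a)"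
  using is_isoI[OF Id_hom Id_hom] comp_Id_left[OF Id_hom] by blast

lemma is_iso_comp:
  assumes f: "f \<in> hom C a b" and g: "g \<in> hom C b c" and "is_iso C f" "is_iso C g"
  shows "is_iso C (Comp C g f)"
proof -
  obtain f' where f': "f' \<in> hom C b a" "Comp C f' f = Id C a" "Comp C f f' = Id C b"
    using is_isoE assms by metis
  obtain g' where g': "g' \<in> hom C c b" "Comp C g' g = Id C b" "Comp C g g' = Id C c"
    using is_isoE assms by metis
  have "Comp C (Comp C f' g') (Comp C g f) = Comp C f' (Comp C (Comp C g' g) f)"
    using comp_assoc[OF comp_hom[OF f g] g'(1) f'(1)] comp_assoc[OF f g g'(1)] by simp
  also have "\<dots> = Id C a" using f f' g' comp_Id_left by simp
  finally have left: "Comp C (Comp C f' g') (Comp C g f) = Id C a" .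
  have "Comp C (Comp C g f) (Comp C f' g') = Comp C g (Comp C (Comp C f f') g')"
    using comp_assoc[OF comp_hom[OF g'(1) f'(1)] f g] comp_assoc[OF g'(1) f'(1) f] by simp
  also have "\<dots> = Id C c" using g f' g' comp_Id_left by simp
  finally have right: "Comp C (Comp C g f) (Comp C f' g') = Id C c" .
  show ?thesis using is_isoI[OF comp_hom[OF f g] comp_hom[OF g'(1) f'(1)] left right] .
qed

end

locale preadditive_cat =
  fixes C :: "('o, 'm, 'x) addcat_scheme"
  assumes preadditive: "preadditive C"

sublocale preadditive_cat \<subseteq> cat
  using preadditive by unfold_locales (simp add: preadditive_def)

context preadditive_cat
begin

lemma Zm_hom: "a \<in> Obj C \<Longrightarrow> b \<in> Obj C \<Longrightarrow> Zm C a b \<in> hom C a b"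
  using preadditive unfolding preadditive_def by blast

lemma Neg_hom: "f \<in> hom C a b \<Longrightarrow> Neg C f \<in> hom C a b"
  using preadditive hom_Obj unfolding preadditive_def by blast

lemma Add_assoc:
  "f \<in> hom C a b \<Longrightarrow> g \<in> hom C a b \<Longrightarrow> h \<in> hom C a b \<Longrightarrow>
    Add C (Add C f g) h = Add C f (Add C g h)"
  using preadditive hom_Obj unfolding preadditive_def by blast

lemma Add_Zm: "f \<in> hom C a b \<Longrightarrow> Add C f (Zm C a b) = f"
  using preadditive hom_Obj unfolding preadditive_def by blast

lemma Add_Neg: "f \<in> hom C a b \<Longrightarrow> Add C f (Neg C f) = Zm C a b"
  using preadditive hom_Obj unfolding preadditive_def by blast

lemma comp_Add_right:
  "f \<in> hom C a b \<Longrightarrow> f' \<in> hom C a b \<Longrightarrow> g \<in> hom C b c \<Longrightarrow>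
    Comp C g (Add C f f') = Add C (Comp C g f) (Comp C g f')"
  using preadditive hom_Obj unfolding preadditive_def by metis

lemma comp_Add_left:
  "f \<in> hom C a b \<Longrightarrow> g \<in> hom C b c \<Longrightarrow> g' \<in> hom C b c \<Longrightarrow>
    Comp C (Add C g g') f = Add C (Comp C g f) (Comp C g' f)"
  using preadditive hom_Obj unfolding preadditive_def by metis

lemma idempotent_eq_Zm:
  assumes x: "x \<in> hom C a b" and idem: "Add C x x = x"
  shows "x = Zm C a b"
  using Add_assoc[OF x x Neg_hom[OF x]] idem Add_Neg[OF x] Add_Zm[OF x] by simp

lemma comp_Zm_right:
  assumes g: "g \<in> hom C b c" and a: "a \<in> Obj C"
  shows "Comp C g (Zm C a b) = Zm C a c"
proof -
  have z: "Zm C a b \<in> hom C a b" using Zm_hom a hom_Obj[OF g] by blast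
  have "Add C (Zm C a b) (Zm C a b) = Zm C a b" using Add_Zm[OF z] .
  then show ?thesis
    using idempotent_eq_Zm[OF comp_hom[OF z g]] comp_Add_right[OF z z g] by simp
qed

lemma comp_Zm_left:
  assumes f: "f \<in> hom C a b" and c: "c \<in> Obj C"
  shows "Comp C (Zm C b c) f = Zm C a c"
proof -
  have z: "Zm C b c \<in> hom C b c" using Zm_hom c hom_Obj[OF f] by blast
  have "Add C (Zm C b c) (Zm C b c) = Zm C b c" using Add_Zm[OF z] .
  then show ?thesis
    using idempotent_eq_Zm[OF comp_hom[OF f z]] comp_Add_left[OF f z z] by simp
qed

lemma zero_obj_hom_eq_Zm:
  assumes z: "zero_obj C z" and f: "f \<in> hom C a z"
  shows "f = Zm C a z"
proof -
  have a: "a \<in> Obj C" and "z \<in> Obj C" using hom_Obj[OF f] .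
  then have "Zm C a z \<in> hom C a z" using Zm_hom by blast
  moreover have "\<exists>!f. f \<in> hom C a z" using z a unfolding zero_obj_def by blast
  ultimately show ?thesis using f by blast
qed

lemma zero_objI:
  assumes a: "a \<in> Obj C" and Id_Zm: "Id C a = Zm C a a"
  shows "zero_obj C a"
  unfolding zero_obj_def
proof (intro conjI ballI ex1I)
  fix t assume t: "t \<in> Obj C"
  show "Zm C a t \<in> hom C a t" "Zm C t a \<in> hom C t a" using Zm_hom a t by auto
  show "f = Zm C a t" if "f \<in> hom C a t" for f
    using comp_Id_right[OF that] comp_Zm_right[OF that a] Id_Zm by simp
  show "f = Zm C t a" if "f \<in> hom C t a" for f
    using comp_Id_left[OF that] comp_Zm_left[OF that a] Id_Zm by simp
qed (fact a)

lemma zero_obj_retract: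
  assumes z: "zero_obj C z" and g: "g \<in> hom C z b" and h: "h \<in> hom C b z"
    and gh: "Comp C g h = Id C b"
  shows "zero_obj C b"
proof (rule zero_objI)
  show b: "b \<in> Obj C" using hom_Obj[OF g] by simp
  show "Id C b = Zm C b b"
    using gh zero_obj_hom_eq_Zm[OF z h] comp_Zm_right[OF g b] by simp
qed

lemma kernel_comp:
  assumes "is_kernel C i d" "i \<in> hom C K Y" "d \<in> hom C Y Z"
  shows "Comp C d i = Zm C K Z"
proof -
  have "Comp C d i = Zm C (Dom C i) (Cod C d)" using assms(1) unfolding is_kernel_def by blast
  then show ?thesis using assms(2,3) unfolding hom_def by simp
qed

lemma kernel_unique_factor:
  assumes ker: "is_kernel C i d" and i: "i \<in> hom C K Y" and d: "d \<in> hom C Y Z"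
    and h: "h \<in> hom C t Y" and dh: "Comp C d h = Zm C t Z"
  shows "\<exists>!u. u \<in> hom C t K \<and> Comp C i u = h"
proof -
  have "\<forall>t \<in> Obj C. \<forall>h \<in> hom C t (Dom C d). Comp C d h = Zm C t (Cod C d) \<longrightarrow>
      (\<exists>!u. u \<in> hom C t (Dom C i) \<and> Comp C i u = h)"
    using ker unfolding is_kernel_def by blast
  moreover have "Dom C i = K" "Dom C d = Y" "Cod C d = Z" using i d unfolding hom_def by auto
  ultimately have "\<forall>t \<in> Obj C. \<forall>h \<in> hom C t Y. Comp C d h = Zm C t Z \<longrightarrow>
      (\<exists>!u. u \<in> hom C t K \<and> Comp C i u = h)"
    by simp
  then show ?thesis using hom_Obj[OF h] h dh by blast
qed

lemma is_kernelI:
  assumes i: "i \<in> hom C K Y" and d: "d \<in> hom C Y Z" and di: "Comp C d i = Zm C K Z"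
    and factor: "\<And>t h. h \<in> hom C t Y \<Longrightarrow> Comp C d h = Zm C t Z \<Longrightarrow>
      \<exists>u \<in> hom C t K. Comp C i u = h"
    and cancel: "\<And>t u v. u \<in> hom C t K \<Longrightarrow> v \<in> hom C t K \<Longrightarrow> Comp C i u = Comp C i v \<Longrightarrow>
      u = v"
  shows "is_kernel C i d"
proof -
  have "Dom C i = K" "Cod C i = Y" "Dom C d = Y" "Cod C d = Z" "i \<in> Mor C" "d \<in> Mor C"
    using i d unfolding hom_def by auto
  moreover have "\<exists>!u. u \<in> hom C t K \<and> Comp C i u = h"
    if "h \<in> hom C t Y" "Comp C d h = Zm C t Z" for t h
    using factor[OF that] cancel by blast
  ultimately show ?thesis using di unfolding is_kernel_def by auto
qed

lemma kernel_factor: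
  assumes "is_kernel C i d" "i \<in> hom C K Y" "d \<in> hom C Y Z"
    and "h \<in> hom C t Y" "Comp C d h = Zm C t Z"
  obtains u where "u \<in> hom C t K" "Comp C i u = h"
  using kernel_unique_factor[OF assms] by blast

lemma kernel_cancel:
  assumes ker: "is_kernel C i d" and i: "i \<in> hom C K Y" and d: "d \<in> hom C Y Z"
    and u: "u \<in> hom C t K" and v: "v \<in> hom C t K" and eq: "Comp C i u = Comp C i v"
  shows "u = v"
proof -
  have Z: "Z \<in> Obj C" using hom_Obj[OF d] by simp
  have "Comp C d (Comp C i u) = Zm C t Z"
    using comp_assoc[OF u i d] kernel_comp[OF ker i d] comp_Zm_left[OF u Z] by simp
  from kernel_unique_factor[OF ker i d comp_hom[OF u i] this] show ?thesis
    using u v eq by (metis (no_types, lifting))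
qed

lemma cokernel_unique_factor:
  assumes coker: "is_cokernel C d i" and i: "i \<in> hom C K Y" and d: "d \<in> hom C Y Z"
    and h: "h \<in> hom C Y t" and hi: "Comp C h i = Zm C K t"
  shows "\<exists>!u. u \<in> hom C Z t \<and> Comp C u d = h"
proof -
  have "\<forall>t \<in> Obj C. \<forall>h \<in> hom C (Cod C i) t. Comp C h i = Zm C (Dom C i) t \<longrightarrow>
      (\<exists>!u. u \<in> hom C (Cod C d) t \<and> Comp C u d = h)"
    using coker unfolding is_cokernel_def by blast
  moreover have "Dom C i = K" "Cod C i = Y" "Cod C d = Z" using i d unfolding hom_def by auto
  ultimately have "\<forall>t \<in> Obj C. \<forall>h \<in> hom C Y t. Comp C h i = Zm C K t \<longrightarrow>
      (\<exists>!u. u \<in> hom C Z t \<and> Comp C u d = h)"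
    by simp
  then show ?thesis using hom_Obj[OF h] h hi by blast
qed

lemma cokernel_cancel:
  assumes coker: "is_cokernel C d i" and i: "i \<in> hom C K Y" and d: "d \<in> hom C Y Z"
    and u: "u \<in> hom C Z t" and v: "v \<in> hom C Z t" and eq: "Comp C u d = Comp C v d"
  shows "u = v"
proof -
  have K: "K \<in> Obj C" using hom_Obj[OF i] by simp
  have "Comp C d i = Zm C (Dom C i) (Cod C d)" using coker unfolding is_cokernel_def by blast
  then have "Comp C d i = Zm C K Z" using i d unfolding hom_def by simp
  then have "Comp C (Comp C u d) i = Zm C K t"
    using comp_assoc[OF i d u] comp_Zm_right[OF u K] by simp
  from cokernel_unique_factor[OF coker i d comp_hom[OF d u] this] show ?thesis
    using u v eq by (metis (no_types, lifting))
qed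

lemma kernels_iso:
  assumes ker: "is_kernel C i d" "is_kernel C i' d"
    and i: "i \<in> hom C K Y" and i': "i' \<in> hom C K' Y" and d: "d \<in> hom C Y Z"
  obtains a where "a \<in> hom C K K'" "is_iso C a" "Comp C i' a = i"
proof -
  obtain a where a: "a \<in> hom C K K'" "Comp C i' a = i"
    using kernel_factor[OF ker(2) i' d i kernel_comp[OF ker(1) i d]] .
  obtain b where b: "b \<in> hom C K' K" "Comp C i b = i'"
    using kernel_factor[OF ker(1) i d i' kernel_comp[OF ker(2) i' d]] .
  have "Comp C i (Comp C b a) = Comp C i (Id C K)"
    using comp_assoc[OF a(1) b(1) i] a(2) b(2) comp_Id_right[OF i] by simp
  then have ba: "Comp C b a = Id C K"
    using kernel_cancel[OF ker(1) i d comp_hom[OF a(1) b(1)] Id_hom] hom_Obj[OF i] by simp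
  have "Comp C i' (Comp C a b) = Comp C i' (Id C K')"
    using comp_assoc[OF b(1) a(1) i'] a(2) b(2) comp_Id_right[OF i'] by simp
  then have ab: "Comp C a b = Id C K'"
    using kernel_cancel[OF ker(2) i' d comp_hom[OF b(1) a(1)] Id_hom] hom_Obj[OF i'] by simp
  show thesis using that a is_isoI[OF a(1) b(1) ba ab] by blast
qed

lemma kernel_into_zero_obj_iso:
  assumes ker: "is_kernel C k e" and k: "k \<in> hom C X Y" and e: "e \<in> hom C Y Z"
    and z: "zero_obj C Z"
  shows "is_iso C k"
proof -
  have X: "X \<in> Obj C" and Y: "Y \<in> Obj C" using hom_Obj[OF k] .
  have "Comp C e (Id C Y) = Zm C Y Z"
    using comp_Id_right[OF e] zero_obj_hom_eq_Zm[OF z e] by simp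
  then obtain u where u: "u \<in> hom C Y X" "Comp C k u = Id C Y"
    using kernel_factor[OF ker k e Id_hom[OF Y]] by blast
  have "Comp C k (Comp C u k) = Comp C k (Id C X)"
    using comp_assoc[OF k u(1) k] u(2) comp_Id_left[OF k] comp_Id_right[OF k] by simp
  then have "Comp C u k = Id C X"
    using kernel_cancel[OF ker k e comp_hom[OF k u(1)] Id_hom[OF X]] by simp
  then show ?thesis using is_isoI[OF k u(1)] u(2) by blast
qed

lemma kernel_of_Id_zero_obj:
  assumes ker: "is_kernel C i (Id C X)" and i: "i \<in> hom C K X"
  shows "zero_obj C K"
proof -
  have K: "K \<in> Obj C" and X: "X \<in> Obj C" using hom_Obj[OF i] .
  have "i = Zm C K X"
    using kernel_comp[OF ker i Id_hom[OF X]] comp_Id_left[OF i] by simp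
  then have "Comp C i (Id C K) = Comp C i (Zm C K K)"
    using comp_Id_right[OF i] comp_Zm_right[OF i K] by simp
  then show ?thesis
    using kernel_cancel[OF ker i Id_hom[OF X] Id_hom[OF K] Zm_hom[OF K K]] zero_objI[OF K] by simp
qed

lemma kernel_iso_if_cokernel_factors:
  assumes ker: "is_kernel C m q" and m: "m \<in> hom C Z' Z" and q: "q \<in> hom C Z Q"
    and coker: "is_cokernel C e k" and k: "k \<in> hom C X Y" and e: "e \<in> hom C Y Z"
    and v: "v \<in> hom C Y Z'" and factor: "e = Comp C m v"
  shows "is_iso C m"
proof -
  have Z': "Z' \<in> Obj C" and Z: "Z \<in> Obj C" and Q: "Q \<in> Obj C"
    using hom_Obj[OF m] hom_Obj[OF q] by auto
  have "Comp C q e = Comp C (Comp C q m) v" using factor comp_assoc[OF v m q] by simp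
  also have "\<dots> = Comp C (Zm C Z Q) e"
    using kernel_comp[OF ker m q] comp_Zm_left[OF v Q] comp_Zm_left[OF e Q] by simp
  finally have "q = Zm C Z Q"
    using cokernel_cancel[OF coker k e q Zm_hom[OF Z Q]] by simp
  then have "Comp C q (Id C Z) = Zm C Z Q" using comp_Id_right[OF q] by simp
  then obtain u where u: "u \<in> hom C Z Z'" "Comp C m u = Id C Z"
    using kernel_factor[OF ker m q Id_hom[OF Z]] by blast
  have "Comp C m (Comp C u m) = Comp C m (Id C Z')"
    using comp_assoc[OF m u(1) m] u(2) comp_Id_left[OF m] comp_Id_right[OF m] by simp
  then have "Comp C u m = Id C Z'"
    using kernel_cancel[OF ker m q comp_hom[OF m u(1)] Id_hom[OF Z']] by simp
  then show ?thesis using is_isoI[OF m u(1)] u(2) by blast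
qed

lemma pullback_hom:
  assumes pb: "is_pullback C e m d' f'" and e: "e \<in> hom C Y Z" and m: "m \<in> hom C Z' Z"
  shows "d' \<in> hom C (Dom C d') Z'" and "f' \<in> hom C (Dom C d') Y"
    and "Comp C e f' = Comp C m d'"
  using pb e m unfolding is_pullback_def hom_def by auto

lemma pullback_unique_factor:
  assumes pb: "is_pullback C e m d' f'" and e: "e \<in> hom C Y Z" and m: "m \<in> hom C Z' Z"
    and d': "d' \<in> hom C P Z'"
    and u: "u \<in> hom C t Z'" and v: "v \<in> hom C t Y" and eq: "Comp C m u = Comp C e v"
  shows "\<exists>!w. w \<in> hom C t P \<and> Comp C d' w = u \<and> Comp C f' w = v"
proof -
  have "\<forall>t \<in> Obj C. \<forall>u \<in> hom C t (Dom C m). \<forall>v \<in> hom C t (Dom C e).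
      Comp C m u = Comp C e v \<longrightarrow>
      (\<exists>!w. w \<in> hom C t (Dom C d') \<and> Comp C d' w = u \<and> Comp C f' w = v)"
    using pb unfolding is_pullback_def by blast
  moreover have "Dom C m = Z'" "Dom C e = Y" "Dom C d' = P"
    using e m d' unfolding hom_def by auto
  ultimately show ?thesis using hom_Obj[OF u] u v eq by simp
qed

lemma pullback_factor:
  assumes "is_pullback C e m d' f'" "e \<in> hom C Y Z" "m \<in> hom C Z' Z" "d' \<in> hom C P Z'"
    and "u \<in> hom C t Z'" "v \<in> hom C t Y" "Comp C m u = Comp C e v"
  obtains w where "w \<in> hom C t P" "Comp C d' w = u" "Comp C f' w = v"
  using pullback_unique_factor[OF assms] by blast

lemma pullback_cancel:
  assumes pb: "is_pullback C e m d' f'" and e: "e \<in> hom C Y Z" and m: "m \<in> hom C Z' Z"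
    and d': "d' \<in> hom C P Z'" and f': "f' \<in> hom C P Y"
    and w: "w \<in> hom C t P" and w': "w' \<in> hom C t P"
    and eq: "Comp C d' w = Comp C d' w'" "Comp C f' w = Comp C f' w'"
  shows "w = w'"
proof -
  have "Comp C m (Comp C d' w) = Comp C e (Comp C f' w)"
    using comp_assoc[OF w d' m] comp_assoc[OF w f' e] pullback_hom(3)[OF pb e m] by simp
  from pullback_unique_factor[OF pb e m d' comp_hom[OF w d'] comp_hom[OF w f'] this]
  show ?thesis using w w' eq by (metis (no_types, lifting))
qed

lemma pullback_kernel_comp:
  assumes ker: "is_kernel C m q" and m: "m \<in> hom C Z' Z" and q: "q \<in> hom C Z Q"
    and pb: "is_pullback C e m d' f'" and e: "e \<in> hom C Y Z"
    and d': "d' \<in> hom C P Z'" and f': "f' \<in> hom C P Y"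
  shows "is_kernel C f' (Comp C q e)"
proof (rule is_kernelI[OF f' comp_hom[OF e q]])
  have square: "Comp C e f' = Comp C m d'" using pullback_hom(3)[OF pb e m] .
  have Q: "Q \<in> Obj C" using hom_Obj[OF q] by simp
  have "Comp C (Comp C q e) f' = Comp C (Comp C q m) d'"
    using comp_assoc[OF f' e q] comp_assoc[OF d' m q] square by simp
  then show "Comp C (Comp C q e) f' = Zm C P Q"
    using kernel_comp[OF ker m q] comp_Zm_left[OF d' Q] by simp
  fix t h assume h: "h \<in> hom C t Y" and "Comp C (Comp C q e) h = Zm C t Q"
  then have "Comp C q (Comp C e h) = Zm C t Q" using comp_assoc[OF h e q] by simp
  then obtain v where v: "v \<in> hom C t Z'" "Comp C m v = Comp C e h"
    using kernel_factor[OF ker m q comp_hom[OF h e]] by blast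
  then show "\<exists>w \<in> hom C t P. Comp C f' w = h"
    using pullback_factor[OF pb e m d' v(1) h v(2)] by blast
next
  fix t w w' assume w: "w \<in> hom C t P" and w': "w' \<in> hom C t P"
    and eq: "Comp C f' w = Comp C f' w'"
  have "Comp C m (Comp C d' w) = Comp C m (Comp C d' w')"
    using comp_assoc[OF w d' m] comp_assoc[OF w' d' m] comp_assoc[OF w f' e]
      comp_assoc[OF w' f' e] pullback_hom(3)[OF pb e m] eq by simp
  then have "Comp C d' w = Comp C d' w'"
    using kernel_cancel[OF ker m q comp_hom[OF w d'] comp_hom[OF w' d']] by simp
  then show "w = w'" using pullback_cancel[OF pb e m d' f' w w'] eq by simp
qed

lemma pullback_kernel:
  assumes ker: "is_kernel C k e" and k: "k \<in> hom C X Y" and e: "e \<in> hom C Y Z"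
    and pb: "is_pullback C e m d' f'" and m: "m \<in> hom C Z' Z"
    and d': "d' \<in> hom C P Z'" and f': "f' \<in> hom C P Y"
  obtains k' where "k' \<in> hom C X P" "Comp C f' k' = k" "is_kernel C k' d'"
proof -
  have X: "X \<in> Obj C" and Z': "Z' \<in> Obj C" using hom_Obj[OF k] hom_Obj[OF m] by auto
  have "Comp C m (Zm C X Z') = Comp C e k"
    using comp_Zm_right[OF m X] kernel_comp[OF ker k e] by simp
  then obtain k' where k': "k' \<in> hom C X P" "Comp C d' k' = Zm C X Z'" "Comp C f' k' = k"
    using pullback_factor[OF pb e m d' Zm_hom[OF X Z'] k] by blast
  have "is_kernel C k' d'"
  proof (rule is_kernelI[OF k'(1) d' k'(2)])
    fix t h assume h: "h \<in> hom C t P" and d'h: "Comp C d' h = Zm C t Z'"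
    have t: "t \<in> Obj C" using hom_Obj[OF h] by simp
    have "Comp C e (Comp C f' h) = Comp C m (Comp C d' h)"
      using comp_assoc[OF h f' e] comp_assoc[OF h d' m] pullback_hom(3)[OF pb e m] by simp
    also have "\<dots> = Zm C t Z" using d'h comp_Zm_right[OF m t] by simp
    finally obtain u where u: "u \<in> hom C t X" "Comp C k u = Comp C f' h"
      using kernel_factor[OF ker k e comp_hom[OF h f']] by blast
    have "Comp C d' (Comp C k' u) = Comp C d' h"
      using comp_assoc[OF u(1) k'(1) d'] k'(2) comp_Zm_left[OF u(1) Z'] d'h by simp
    moreover have "Comp C f' (Comp C k' u) = Comp C f' h"
      using comp_assoc[OF u(1) k'(1) f'] k'(3) u(2) by simp
    ultimately have "Comp C k' u = h"
      using pullback_cancel[OF pb e m d' f' comp_hom[OF u(1) k'(1)] h] by simp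
    then show "\<exists>u \<in> hom C t X. Comp C k' u = h" using u(1) by blast
  next
    fix t u v assume u: "u \<in> hom C t X" and v: "v \<in> hom C t X"
      and "Comp C k' u = Comp C k' v"
    then have "Comp C k u = Comp C k v"
      using comp_assoc[OF u k'(1) f'] comp_assoc[OF v k'(1) f'] k'(3) by metis
    then show "u = v" using kernel_cancel[OF ker k e u v] by simp
  qed
  then show thesis using that k' by blast
qed

end

locale exact_cat =
  fixes C :: "('o, 'm, 'x) addcat_scheme" and E :: "('m \<times> 'm) set"
  assumes exact: "exact_category C E"

sublocale exact_cat \<subseteq> preadditive_cat
  using exact by unfold_locales (simp add: exact_category_def additive_def)

context exact_cat
begin

lemma E_kernel_cokernel_pair: "(i, d) \<in> E \<Longrightarrow> kernel_cokernel_pair C i d"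
  using exact unfolding exact_category_def by (elim conjE) blast

lemma E_kernel: "(i, d) \<in> E \<Longrightarrow> is_kernel C i d"
  using E_kernel_cokernel_pair unfolding kernel_cokernel_pair_def by blast

lemma E_cokernel: "(i, d) \<in> E \<Longrightarrow> is_cokernel C d i"
  using E_kernel_cokernel_pair unfolding kernel_cokernel_pair_def by blast

lemma E_hom:
  assumes "(i, d) \<in> E"
  shows "i \<in> hom C (Dom C i) (Dom C d)" and "d \<in> hom C (Dom C d) (Cod C d)"
  using E_kernel[OF assms] unfolding is_kernel_def hom_def by auto

lemma adm_monic_hom: "adm_monic C E m \<Longrightarrow> m \<in> hom C (Dom C m) (Cod C m)"
  unfolding adm_monic_def using E_hom(1) unfolding hom_def by blast

lemma adm_epic_Id: "a \<in> Obj C \<Longrightarrow> adm_epic C E (Id C a)"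
  using exact unfolding exact_category_def by (elim conjE) blast

lemma adm_monic_comp:
  "adm_monic C E i \<Longrightarrow> adm_monic C E j \<Longrightarrow> Cod C i = Dom C j \<Longrightarrow> adm_monic C E (Comp C j i)"
  using exact unfolding exact_category_def by (elim conjE) blast

lemma adm_epic_comp:
  "adm_epic C E d \<Longrightarrow> adm_epic C E e \<Longrightarrow> Cod C d = Dom C e \<Longrightarrow> adm_epic C E (Comp C e d)"
  using exact unfolding exact_category_def by (elim conjE) blast

lemma adm_epic_pullback:
  assumes "adm_epic C E d" "f \<in> Mor C" "Cod C f = Cod C d"
  obtains d' f' where "is_pullback C d f d' f'" "adm_epic C E d'"
proof -
  have "\<exists>d' f'. is_pullback C d f d' f' \<and> adm_epic C E d'"
    using assms exact unfolding exact_category_def by (elim conjE) blast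
  then show thesis using that by blast
qed

lemma E_iso_closed:
  assumes E: "(i, d) \<in> E" and kc: "kernel_cokernel_pair C i' d"
    and a: "a \<in> hom C (Dom C i) (Dom C i')" "is_iso C a" and i': "Comp C i' a = i"
  shows "(i', d) \<in> E"
proof -
  have i: "i \<in> hom C (Dom C i) (Dom C d)" and d: "d \<in> hom C (Dom C d) (Cod C d)"
    using E_hom[OF E] .
  have "Cod C i' = Dom C d" using kc unfolding kernel_cokernel_pair_def is_kernel_def by blast
  moreover have Y: "Dom C d \<in> Obj C" and Z: "Cod C d \<in> Obj C" using hom_Obj[OF d] .
  \<comment> \<open>closure of E under isomorphic kernel-cokernel pairs, with identities on Y and Z\<close>
  ultimately show ?thesis
    using exact[unfolded exact_category_def, THEN conjunct2, THEN conjunct2, THEN conjunct1,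
        rule_format, OF E kc a(2) is_iso_Id[OF Y] is_iso_Id[OF Z]]
      a(1) i i' Id_hom[OF Y] Id_hom[OF Z] comp_Id_left[OF i] comp_Id_left[OF d] comp_Id_right[OF d]
    unfolding hom_def by auto
qed

lemma E_if_kernel:
  assumes E: "(i, d) \<in> E" and ker: "is_kernel C i' d"
  shows "(i', d) \<in> E"
proof -
  have i: "i \<in> hom C (Dom C i) (Dom C d)" and d: "d \<in> hom C (Dom C d) (Cod C d)"
    using E_hom[OF E] .
  have i': "i' \<in> hom C (Dom C i') (Dom C d)" using ker unfolding is_kernel_def hom_def by auto
  obtain a where a: "a \<in> hom C (Dom C i) (Dom C i')" "is_iso C a" "Comp C i' a = i"
    using kernels_iso[OF E_kernel[OF E] ker i i' d] .
  have "is_cokernel C d i'"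
    unfolding is_cokernel_def
  proof (intro conjI ballI impI)
    show "i' \<in> Mor C" "d \<in> Mor C" "Cod C i' = Dom C d"
      and "Comp C d i' = Zm C (Dom C i') (Cod C d)"
      using ker unfolding is_kernel_def by auto
    fix t h assume "h \<in> hom C (Cod C i') t" and hi': "Comp C h i' = Zm C (Dom C i') t"
    then have h: "h \<in> hom C (Dom C d) t" using i' unfolding hom_def by auto
    have "Comp C h i = Zm C (Dom C i) t"
      using a(3) comp_assoc[OF a(1) i' h] hi' comp_Zm_left[OF a(1)] hom_Obj[OF h] by simp
    then show "\<exists>!u. u \<in> hom C (Cod C d) t \<and> Comp C u d = h"
      using cokernel_unique_factor[OF E_cokernel[OF E] i d h] by blast
  qed
  with ker show ?thesis
    using E_iso_closed[OF E _ a] unfolding kernel_cokernel_pair_def by blast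
qed

text \<open>P is the pullback of e along m, and j is its projection to Y.\<close>

lemma conflation_pullback:
  assumes ke: "(k, e) \<in> E" and k: "k \<in> hom C X Y" and e: "e \<in> hom C Y Z"
    and m: "m \<in> hom C Z' Z" and m_monic: "adm_monic C E m" and m_not_iso: "\<not> is_iso C m"
  obtains P k' e' j where "(k', e') \<in> E" "k' \<in> hom C X P" "e' \<in> hom C P Z'"
    and "j \<in> hom C P Y" "adm_monic C E j" "\<not> is_iso C j"
proof -
  obtain q where mq: "(m, q) \<in> E" using m_monic unfolding adm_monic_def by blast
  have q: "q \<in> hom C Z (Cod C q)" using E_hom(2)[OF mq] E_hom(1)[OF mq] m
    unfolding hom_def by auto
  obtain d' f' where pb: "is_pullback C e m d' f'" and d'_epic: "adm_epic C E d'"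
    using adm_epic_pullback[of e m] ke e m unfolding adm_epic_def hom_def by auto
  define P where "P = Dom C d'"
  have d': "d' \<in> hom C P Z'" and f': "f' \<in> hom C P Y" and square: "Comp C e f' = Comp C m d'"
    using pullback_hom[OF pb e m] unfolding P_def by auto
  have "adm_epic C E (Comp C q e)"
    using adm_epic_comp ke mq e q unfolding adm_epic_def hom_def by auto
  then have f'_E: "(f', Comp C q e) \<in> E"
    using E_if_kernel pullback_kernel_comp[OF E_kernel[OF mq] m q pb e d' f']
    unfolding adm_epic_def by blast
  obtain k' where k': "k' \<in> hom C X P" "is_kernel C k' d'"
    using pullback_kernel[OF E_kernel[OF ke] k e pb m d' f'] by blast
  have "\<not> is_iso C f'"
  proof
    assume "is_iso C f'"
    then obtain g where g: "g \<in> hom C Y P" "Comp C f' g = Id C Y" using is_isoE f' by metis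
    have "e = Comp C m (Comp C d' g)"
      using comp_Id_right[OF e] g(2) comp_assoc[OF g(1) f' e] square comp_assoc[OF g(1) d' m]
      by simp
    then show False
      using kernel_iso_if_cokernel_factors[OF E_kernel[OF mq] m q E_cokernel[OF ke] k e
          comp_hom[OF g(1) d']] m_not_iso by blast
  qed
  moreover have "(k', d') \<in> E" using d'_epic E_if_kernel k'(2) unfolding adm_epic_def by blast
  ultimately show thesis using that k'(1) d' f' f'_E unfolding adm_monic_def by blast
qed

lemma E_chain_iso:
  assumes chain: "E_chain C E X n" and k: "k \<in> hom C X Y"
    and k_monic: "adm_monic C E k" and k_iso: "is_iso C k"
  shows "E_chain C E Y n"
proof -
  obtain Z where Z: "zero_obj C Z" and path: "adm_path C E Z X n"
    using chain unfolding E_chain_iff_adm_path by blast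
  obtain u where u: "u \<in> hom C Y X" "Comp C u k = Id C X" "Comp C k u = Id C Y"
    using is_isoE[OF k_iso k] by blast
  from path show ?thesis
  proof cases
    case refl
    then have "zero_obj C X" using Z by simp
    then have "zero_obj C Y" using zero_obj_retract[OF _ k u(1) u(3)] by blast
    then show ?thesis unfolding E_chain_iff_adm_path using refl(2) by (blast intro: adm_path.refl)
  next
    case (snoc B n' m)
    have m: "m \<in> hom C B X" using adm_monic_hom[OF snoc(3)] snoc(4,5) by simp
    have "\<not> is_iso C (Comp C k m)"
    proof
      assume "is_iso C (Comp C k m)"
      then have "is_iso C (Comp C u (Comp C k m))"
        using is_iso_comp[OF comp_hom[OF m k] u(1)] is_isoI[OF u(1) k u(3) u(2)] by blast
      then show False
        using comp_assoc[OF m k u(1)] u(2) comp_Id_left[OF m] snoc(6) by simp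
    qed
    moreover have "adm_monic C E (Comp C k m)"
      using adm_monic_comp[OF snoc(3) k_monic] m k unfolding hom_def by simp
    ultimately have "adm_path C E Z Y (Suc n')"
      using adm_path.snoc[OF snoc(2)] comp_hom[OF m k] unfolding hom_def by blast
    then show ?thesis unfolding E_chain_iff_adm_path using Z snoc(1) by blast
  qed
qed

lemma E_chain_exists:
  assumes X: "X \<in> Obj C"
  obtains n where "E_chain C E X n"
proof -
  obtain i where iE: "(i, Id C X) \<in> E" using adm_epic_Id[OF X] unfolding adm_epic_def by blast
  have i: "i \<in> hom C (Dom C i) X" using E_hom(1)[OF iE] Id_hom[OF X] unfolding hom_def by auto
  have "zero_obj C (Dom C i)" using kernel_of_Id_zero_obj[OF E_kernel[OF iE] i] .
  then have chain0: "E_chain C E (Dom C i) 0"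
    unfolding E_chain_iff_adm_path by (blast intro: adm_path.refl)
  have i_monic: "adm_monic C E i" using iE unfolding adm_monic_def by blast
  show thesis
  proof (cases "is_iso C i")
    case True
    then show thesis using that E_chain_iso[OF chain0 i i_monic] by blast
  next
    case False
    then show thesis using that E_chain_snoc[OF chain0 i_monic] i unfolding hom_def by blast
  qed
qed

lemma E_length_attained:
  assumes "E_finite C E X" and "X \<in> Obj C"
  obtains n where "E_chain C E X n" and "E_length C E X = enat n"
proof -
  obtain n where "E_chain C E X n" using E_chain_exists[OF assms(2)] .
  then have "{n. E_chain C E X n} \<noteq> {}" by blast
  from enat_SUP_attained[OF this] show thesis
    using assms(1) that unfolding E_finite_def E_length_def by blast
qed

lemma E_chain_conflation_middle:
  assumes "adm_path C E Z\<^sub>0 Z n" and "zero_obj C Z\<^sub>0" and "E_chain C E X a"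
    and "(k, e) \<in> E" and "k \<in> hom C X Y" and "e \<in> hom C Y Z"
  shows "E_chain C E Y (a + n)"
  using assms
proof (induction arbitrary: Y k e)
  case refl
  then have "is_iso C k" using kernel_into_zero_obj_iso E_kernel by blast
  moreover have "adm_monic C E k" using \<open>(k, e) \<in> E\<close> unfolding adm_monic_def by blast
  ultimately show ?case using E_chain_iso refl by simp
next
  case (snoc Z\<^sub>0 B n m Z)
  have m: "m \<in> hom C B Z" using adm_monic_hom[OF snoc.hyps(2)] snoc.hyps(3,4) by simp
  obtain P k' e' j where "(k', e') \<in> E" "k' \<in> hom C X P" "e' \<in> hom C P B"
    and j: "j \<in> hom C P Y" "adm_monic C E j" "\<not> is_iso C j"
    using conflation_pullback[OF snoc.prems(3-5) m snoc.hyps(2,5)] .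
  then have "E_chain C E P (a + n)" using snoc.IH snoc.prems(1,2) by blast
  then show ?case using E_chain_snoc[OF _ j(2)] j(1,3) unfolding hom_def by auto
qed

end

theorem theorem6p4:
  fixes C :: "('o, 'm) addcat" and E :: "('m \<times> 'm) set"
    and X Y Z :: 'o and f g :: 'm
  assumes "exact_category C E"
    and "(f, g) \<in> E"
    and "f \<in> hom C X Y" and "g \<in> hom C Y Z"
    and "E_finite C E X" and "E_finite C E Y" and "E_finite C E Z"
  shows "E_length C E Y \<ge> E_length C E X + E_length C E Z"
proof -
  interpret exact_cat C E by unfold_locales (fact assms(1))
  obtain a where a: "E_chain C E X a" "E_length C E X = enat a"
    using E_length_attained[OF assms(5) hom_Obj(1)[OF assms(3)]] .
  obtain b where b: "E_chain C E Z b" "E_length C E Z = enat b"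
    using E_length_attained[OF assms(7) hom_Obj(2)[OF assms(4)]] .
  obtain Z\<^sub>0 where "zero_obj C Z\<^sub>0" "adm_path C E Z\<^sub>0 Z b"
    using b(1) unfolding E_chain_iff_adm_path by blast
  then have "E_chain C E Y (a + b)"
    using E_chain_conflation_middle a(1) assms(2-4) by blast
  then have "enat (a + b) \<le> E_length C E Y"
    unfolding E_length_def by (rule SUP_upper[OF CollectI])
  then show ?thesis using a(2) b(2) by simp
qed

end
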